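(* For $q>0$, $$\tilde\psi(q)=-\frac1q+\tilde\gamma_0+\sum_{k=1}^\infty(-1)^k\left(\frac1k-\frac1{k+q}\right),$$ and the function $$\tilde\Gamma(q)=\frac1q\, e^{\tilde\gamma_0 q}\prod_{k=1}^\infty\left(e^{-\frac qk}\left(1+\frac qk\right)\right)^{(-1)^{k+1}}\qquad(q>0)$$ satisfies the differential equation $\tilde\psi(q)=\frac{d}{dq}\log\tilde\Gamma(q)$.
   Context: For $q>0$, $\zeta_E(z,q)=\sum_{n=0}^\infty (-1)^n (n+q)^{-z}$ for $\mathrm{Re}(z)>0$, extended by analytic continuation to an entire function of $z$. The modified Stieltjes constants $\tilde\gamma_k(q)$ are defined by the Taylor expansion $\zeta_E(z,q)=\sum_{k=0}^\infty\frac{(-1)^k\tilde\gamma_k(q)}{k!}(z-1)^k$; $\tilde\gamma_0:=\tilde\gamma_0(1)=\zeta_E(1,1)$ (the modified Euler constant). The modified digamma function is $\tilde\psi(q):=-\tilde\gamma_0(q)=-\zeta_E(1,q)=-\sum_{n\ge0}\frac{(-1)^n}{n+q}$. The modified gamma function $\tilde\Gamma$ is defined (up to the normalization given by the product) by the differential equation $\frac{d}{dq}\log\tilde\Gamma(q)=\tilde\psi(q)$. *)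

theory Defs
  imports "HOL-Analysis.Analysis"
begin

text \<open>Alternating Hurwitz zeta function, defined by its series for real z > 0, q > 0
  (this is the region where the series converges; at z = 1 this agrees with the
  analytic continuation).\<close>
definition zeta_E :: "real \<Rightarrow> real \<Rightarrow> real" where
  "zeta_E z q = (\<Sum>n. (-1) ^ n / (real n + q) powr z)"

definition gamma0_tilde :: real where
  "gamma0_tilde = zeta_E 1 1"

definition psi_tilde :: "real \<Rightarrow> real" where
  "psi_tilde q = - zeta_E 1 q"

definition Gamma_tilde_factor :: "real \<Rightarrow> nat \<Rightarrow> real" where
  "Gamma_tilde_factor q k =
     (exp (- q / real k) * (1 + q / real k)) powi ((-1) ^ (k + 1))"

definition Gamma_tilde :: "real \<Rightarrow> real" where
  "Gamma_tilde q = (1 / q) * exp (gamma0_tilde * q) *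
     (\<Prod>n. Gamma_tilde_factor q (n + 1))"

end

theory Submission
  imports Defs "HOL-Real_Asymp.Real_Asymp"
begin

text \<open>Write the k-th factor of the product as exp (f k q) with
  f k q = (-1)^(k+1) (ln (1 + q/k) - q/k). Since |f k q| \<le> q^2/k^2, the product converges and
  ln (Gamma_tilde q) = - ln q + gamma0_tilde * q + \<Sum>k f k q.
  The derivatives (-1)^k (1/k - 1/(k + q)) of the terms are bounded by 2q/k^2 near q, so the
  series may be differentiated termwise (Weierstrass M-test). Splitting the differentiated series
  into the alternating series for zeta_E 1 1 and zeta_E 1 q, the latter shifted by one index,
  identifies its sum as psi_tilde q + 1/q - gamma0_tilde.\<close>

lemma summable_inverse_Suc_squared: "summable (\<lambda>n. 1 / real (Suc n) ^ 2)"
  using inverse_power_summable[of 2] by (subst summable_Suc_iff) (simp add: inverse_eq_divide)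

lemma abs_ln_one_plus_x_minus_x_le_sq:
  fixes x :: real
  assumes "0 \<le> x"
  shows "\<bar>ln (1 + x) - x\<bar> \<le> x\<^sup>2"
proof -
  have "ln (1 + x) \<le> x"
    using assms by (rule ln_add_one_self_le_self)
  moreover have "ln (1 / (1 + x)) \<le> 1 / (1 + x) - 1"
    using assms by (intro ln_le_minus_one) simp
  then have "x / (1 + x) \<le> ln (1 + x)"
    using assms by (simp add: ln_div field_simps)
  moreover have "x - x / (1 + x) \<le> x\<^sup>2"
    using assms by (simp add: field_simps power2_eq_square)
  ultimately show ?thesis
    by linarith
qed

lemma sums_zeta_E_one:
  assumes "q > 0"
  shows "(\<lambda>n. (-1) ^ n / (real n + q)) sums zeta_E 1 q"
proof -
  have "summable (\<lambda>n. (-1) ^ n * (1 / (real n + q)))"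
  proof (rule summable_Leibniz')
    show "(\<lambda>n. 1 / (real n + q)) \<longlonglongrightarrow> 0"
      using assms by real_asymp
  qed (use assms in \<open>auto simp: frac_le\<close>)
  moreover have "zeta_E 1 q = (\<Sum>n. (-1) ^ n / (real n + q))"
    using assms by (simp add: zeta_E_def add_nonneg_pos)
  ultimately show ?thesis
    by (simp add: summable_sums)
qed

lemma sums_psi_tilde:
  assumes "q > 0"
  shows "(\<lambda>n. (-1) ^ (n + 1) * (1 / real (n + 1) - 1 / (real (n + 1) + q)))
           sums (psi_tilde q + 1 / q - gamma0_tilde)"
proof -
  have gamma0: "(\<lambda>n. (-1) ^ n / (real n + 1)) sums gamma0_tilde"
    using sums_zeta_E_one[of 1] by (simp add: gamma0_tilde_def)
  have "(\<lambda>n. (-1) ^ Suc n / (real (Suc n) + q)) sums (zeta_E 1 q - 1 / q)"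
    using sums_zeta_E_one[OF assms] sums_Suc_iff[of "\<lambda>n. (-1) ^ n / (real n + q)"] by simp
  with gamma0 have "(\<lambda>n. - ((-1) ^ n / (real n + 1)) - (-1) ^ Suc n / (real (Suc n) + q))
      sums (- gamma0_tilde - (zeta_E 1 q - 1 / q))"
    by (intro sums_diff sums_minus)
  then show ?thesis
    by (simp add: psi_tilde_def algebra_simps)
qed

definition ln_Gamma_tilde_factor :: "real \<Rightarrow> nat \<Rightarrow> real" where
  "ln_Gamma_tilde_factor q k = (-1) ^ (k + 1) * (ln (1 + q / real k) - q / real k)"

lemma Gamma_tilde_factor_eq_exp:
  assumes "q \<ge> 0"
  shows "Gamma_tilde_factor q k = exp (ln_Gamma_tilde_factor q k)"
proof -
  have "1 + q / real k > 0"
    using assms by (simp add: add_pos_nonneg)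
  then have "exp (- q / real k) * (1 + q / real k) = exp (ln (1 + q / real k) - q / real k)"
    by (simp add: exp_diff exp_minus field_simps)
  then have "Gamma_tilde_factor q k = exp (ln (1 + q / real k) - q / real k) powi ((-1) ^ (k + 1))"
    unfolding Gamma_tilde_factor_def by simp
  then show ?thesis
    by (cases "even k") (simp_all add: ln_Gamma_tilde_factor_def power_int_minus flip: exp_minus)
qed

lemma abs_ln_Gamma_tilde_factor_le:
  assumes "q \<ge> 0"
  shows "\<bar>ln_Gamma_tilde_factor q k\<bar> \<le> q\<^sup>2 * (1 / real k ^ 2)"
proof -
  have "\<bar>ln_Gamma_tilde_factor q k\<bar> = \<bar>ln (1 + q / real k) - q / real k\<bar>"
    by (simp add: ln_Gamma_tilde_factor_def abs_mult)
  also have "\<dots> \<le> (q / real k)\<^sup>2"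
    using assms by (intro abs_ln_one_plus_x_minus_x_le_sq) simp
  finally show ?thesis
    by (simp add: power_divide)
qed

lemma summable_ln_Gamma_tilde_factor:
  assumes "q \<ge> 0"
  shows "summable (\<lambda>n. ln_Gamma_tilde_factor q (n + 1))"
proof (rule summable_comparison_test')
  show "summable (\<lambda>n. q\<^sup>2 * (1 / real (Suc n) ^ 2))"
    by (intro summable_mult summable_inverse_Suc_squared)
  show "norm (ln_Gamma_tilde_factor q (n + 1)) \<le> q\<^sup>2 * (1 / real (Suc n) ^ 2)" for n
    using abs_ln_Gamma_tilde_factor_le[OF assms, of "n + 1"] by simp
qed

lemma convergent_prod_Gamma_tilde_factor:
  assumes "q \<ge> 0"
  shows "convergent_prod (\<lambda>n. Gamma_tilde_factor q (n + 1))"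
  using convergent_prod_exp[OF summable_ln_Gamma_tilde_factor[OF assms]]
  by (simp add: Gamma_tilde_factor_eq_exp[OF assms])

lemma ln_Gamma_tilde_eq:
  assumes "q > 0"
  shows "ln (Gamma_tilde q) = - ln q + gamma0_tilde * q + (\<Sum>n. ln_Gamma_tilde_factor q (n + 1))"
proof -
  have "Gamma_tilde q = (1 / q) * exp (gamma0_tilde * q) * exp (\<Sum>n. ln_Gamma_tilde_factor q (n + 1))"
    using assms prodinf_exp[OF summable_ln_Gamma_tilde_factor]
    by (simp add: Gamma_tilde_def Gamma_tilde_factor_eq_exp)
  then show ?thesis
    using assms by (simp add: ln_mult ln_div)
qed

lemma has_field_derivative_ln_Gamma_tilde_factor:
  assumes "k > 0" "real k + q > 0"
  shows "((\<lambda>x. ln_Gamma_tilde_factor x k) has_field_derivative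
           (-1) ^ k * (1 / real k - 1 / (real k + q))) (at q within S)"
proof -
  have "1 + q / real k > 0"
    using assms by (simp add: field_simps)
  then have "((\<lambda>x. ln_Gamma_tilde_factor x k) has_field_derivative
           (-1) ^ (k + 1) * ((1 / real k) / (1 + q / real k) - 1 / real k)) (at q within S)"
    unfolding ln_Gamma_tilde_factor_def using assms by (auto intro!: derivative_eq_intros)
  moreover have "(1 / real k) / (1 + q / real k) = 1 / (real k + q)"
    using assms by (simp add: divide_simps)
  ultimately show ?thesis
    by (simp add: algebra_simps)
qed

lemma has_real_derivative_suminf_ln_Gamma_tilde_factor:
  assumes "q > 0"
  shows "((\<lambda>x. \<Sum>n. ln_Gamma_tilde_factor x (n + 1)) has_real_derivative
           (\<Sum>n. (-1) ^ (n + 1) * (1 / real (n + 1) - 1 / (real (n + 1) + q)))) (at q)"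
proof -
  define S where "S = {0<..<2 * q}"
  define f' where "f' n x = (-1) ^ (n + 1) * (1 / real (n + 1) - 1 / (real (n + 1) + x))"
    for n :: nat and x :: real
  have bound: "\<bar>f' n x\<bar> \<le> 2 * q * (1 / real (Suc n) ^ 2)" if "x \<in> S" for n x
  proof -
    define k where "k = real (Suc n)"
    have "k \<ge> 1" "0 < x" "x \<le> 2 * q"
      using that by (auto simp: S_def k_def)
    then have "\<bar>f' n x\<bar> = x / (k * (k + x))"
      by (simp add: f'_def k_def abs_mult field_simps)
    also have "\<dots> \<le> 2 * q / (k * k)"
      using \<open>k \<ge> 1\<close> \<open>0 < x\<close> \<open>x \<le> 2 * q\<close> by (intro frac_le mult_mono) auto
    finally show ?thesis
      by (simp add: k_def power2_eq_square)
  qed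
  have "uniformly_convergent_on S (\<lambda>n x. \<Sum>i<n. f' i x)"
    unfolding uniformly_convergent_on_def
  proof (rule exI, rule Weierstrass_m_test_ev)
    show "summable (\<lambda>n. 2 * q * (1 / real (Suc n) ^ 2))"
      by (intro summable_mult summable_inverse_Suc_squared)
  qed (use bound in \<open>auto intro: always_eventually\<close>)
  moreover have "((\<lambda>x. ln_Gamma_tilde_factor x (n + 1)) has_field_derivative f' n x) (at x within S)"
    if "x \<in> S" for n x
    using that has_field_derivative_ln_Gamma_tilde_factor[of "n + 1" x S]
    by (simp add: S_def f'_def)
  ultimately have "((\<lambda>x. \<Sum>n. ln_Gamma_tilde_factor x (n + 1)) has_real_derivative
      (\<Sum>n. f' n q)) (at q)"
    using assms summable_ln_Gamma_tilde_factor[of q]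
    by (intro has_field_derivative_series'(2)[of S _ f' q]) (auto simp: S_def)
  then show ?thesis
    by (simp only: f'_def)
qed

lemma has_real_derivative_ln_Gamma_tilde:
  assumes "q > 0"
  shows "((\<lambda>x. ln (Gamma_tilde x)) has_real_derivative psi_tilde q) (at q)"
proof -
  have "((\<lambda>x. - ln x + gamma0_tilde * x + (\<Sum>n. ln_Gamma_tilde_factor x (n + 1)))
          has_real_derivative psi_tilde q) (at q)"
    using assms has_real_derivative_suminf_ln_Gamma_tilde_factor[OF assms]
    unfolding sums_unique[OF sums_psi_tilde[OF assms], symmetric]
    by (auto intro!: derivative_eq_intros)
  then show ?thesis
    by (rule has_field_derivative_transform_within_open[where S = "{0<..}"])
       (use assms ln_Gamma_tilde_eq in auto)
qed

theorem theorem3p12: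
  fixes q :: real
  assumes "q > 0"
  shows "(\<lambda>n. (-1) ^ (n + 1) * (1 / real (n + 1) - 1 / (real (n + 1) + q)))
           sums (psi_tilde q + 1 / q - gamma0_tilde) \<and>
         convergent_prod (\<lambda>n. Gamma_tilde_factor q (n + 1)) \<and>
         ((\<lambda>x. ln (Gamma_tilde x)) has_real_derivative psi_tilde q) (at q)"
  using assms sums_psi_tilde convergent_prod_Gamma_tilde_factor has_real_derivative_ln_Gamma_tilde
  by simp

end
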